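(* Let $\beta>0$, $N\ge1$. For $u\in H_0^1(\mathbb R_+)$ let $\widehat{\Pi}_{N, \beta}^{1,0} u\in\widehat P^0_{N,\beta}$ be defined by $$\bigl((u-\widehat{\Pi}_{N, \beta}^{1,0} u)', v'\bigr)+\frac{\beta^2}{4}\bigl(u-\widehat{\Pi}_{N, \beta}^{1,0} u , v\bigr)=0\qquad \forall v \in \widehat{P}_{N, \beta}^0.$$ Then for every $u\in H_0^1(\mathbb R_+)$, $$\bigl\|u-\widehat{\Pi}_{N, \beta}^{1,0} u\bigr\|_1 \le\Bigl(2+\frac{2}{\beta}\Bigr)\bigl\|u'-\widehat{\Pi}_{N-1}^\beta u'\bigr\|+(\beta+1)\bigl\|u-\widehat{\Pi}_{N-1}^\beta u\bigr\|.$$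
   Context: $(f,g)=\int_0^\infty f g\,dx$ and $\|\cdot\|$ is the $L^2(\mathbb R_+)$ norm; $\|\cdot\|_1$ is the $H^1(\mathbb R_+)$ norm; $H^1_0(\mathbb R_+)=\{u\in H^1(\mathbb R_+):u(0)=0\}$. $P_N$ is the space of polynomials of degree at most $N$, $\widehat P_N^{\beta,L}=\{e^{-\beta x/2}p(x):p\in P_N\}$, and $\widehat P^0_{N,\beta}=\{\phi\in\widehat P_N^{\beta,L}:\phi(0)=0\}$. $\widehat\Pi_{K}^\beta$ denotes the $L^2(\mathbb R_+)$-orthogonal projection onto $\widehat P_K^{\beta,L}$. *)

theory Defs
  imports "HOL-Analysis.Analysis" "HOL-Computational_Algebra.Polynomial"
begin

definition L2_Rplus :: "(real \<Rightarrow> real) \<Rightarrow> bool" where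
  "L2_Rplus f \<longleftrightarrow> set_borel_measurable lborel {0..} f \<and>
     set_integrable lborel {0..} (\<lambda>x. (f x)^2)"

definition l2inner :: "(real \<Rightarrow> real) \<Rightarrow> (real \<Rightarrow> real) \<Rightarrow> real" where
  "l2inner f g = (LINT x:{0..}|lborel. f x * g x)"

definition l2norm :: "(real \<Rightarrow> real) \<Rightarrow> real" where
  "l2norm f = sqrt (LINT x:{0..}|lborel. (f x)^2)"

definition h1norm :: "(real \<Rightarrow> real) \<Rightarrow> (real \<Rightarrow> real) \<Rightarrow> real" where
  "h1norm f df = sqrt ((l2norm f)^2 + (l2norm df)^2)"

text \<open>u belongs to H^1_0(R+) with derivative du: u, du in L2(R+), du locally integrable,
  and (the continuous representative of) u satisfies u(x) = int_0^x du, so in particular u(0) = 0.\<close>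
definition H10_Rplus :: "(real \<Rightarrow> real) \<Rightarrow> (real \<Rightarrow> real) \<Rightarrow> bool" where
  "H10_Rplus u du \<longleftrightarrow> L2_Rplus u \<and> L2_Rplus du \<and>
     (\<forall>x\<ge>0. set_integrable lborel {0..x} du \<and> u x = (LINT t:{0..x}|lborel. du t))"

definition Phat :: "real \<Rightarrow> nat \<Rightarrow> (real \<Rightarrow> real) set" where
  "Phat \<beta> K = {f. \<exists>p :: real poly. degree p \<le> K \<and> f = (\<lambda>x. exp (- \<beta> * x / 2) * poly p x)}"

definition P0hat :: "real \<Rightarrow> nat \<Rightarrow> (real \<Rightarrow> real) set" where
  "P0hat \<beta> N = {f \<in> Phat \<beta> N. f 0 = 0}"

definition hproj :: "real \<Rightarrow> nat \<Rightarrow> (real \<Rightarrow> real) \<Rightarrow> (real \<Rightarrow> real)" where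
  "hproj \<beta> K f = (THE g. g \<in> Phat \<beta> K \<and> (\<forall>v\<in>Phat \<beta> K. l2inner (\<lambda>x. f x - g x) v = 0))"

end

theory Submission
  imports Defs "HOL-Probability.Distributions"
begin

(* Galerkin orthogonality makes w the best approximation of u from P0hat beta N in the energy
   norm |v'|^2 + beta^2/4 |v|^2.  As competitor take phi in P0hat beta N with
   phi' + beta/2 phi = Pi du + beta/2 Pi u, where Pi projects onto Phat beta (N - 1): after
   multiplication by exp (beta x/2) this is q' = p for a polynomial p of degree N - 1, solved by
   q with q(0) = 0.  For v = u - phi in H^1_0 one has (v', v) = v(oo)^2/2 >= 0, so the energy of
   v is at most |v' + beta/2 v|^2 = |(du - Pi du) + beta/2 (u - Pi u)|^2.  The triangle
   inequality and a comparison of the energy norm with the H^1 norm (separately for beta >= 2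
   and beta < 2) give the constants. *)

section \<open>The space $L^2$ on the half-line\<close>

abbreviation Rplus :: "real measure" where
  "Rplus \<equiv> restrict_space lborel {0..}"

lemma L2_Rplus_iff:
  "L2_Rplus f \<longleftrightarrow> f \<in> borel_measurable Rplus \<and> integrable Rplus (\<lambda>x. (f x)^2)"
  unfolding L2_Rplus_def set_borel_measurable_def set_integrable_def
  by (simp add: borel_measurable_restrict_space_iff integrable_restrict_space)

lemma l2inner_eq_integral: "l2inner f g = (\<integral>x. f x * g x \<partial>Rplus)"
  unfolding l2inner_def set_lebesgue_integral_def by (simp add: integral_restrict_space)

lemma integrable_mult_L2_Rplus:
  assumes "L2_Rplus f" "L2_Rplus g"
  shows "integrable Rplus (\<lambda>x. f x * g x)"
proof (rule Bochner_Integration.integrable_bound)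
  show "integrable Rplus (\<lambda>x. (f x)^2 + (g x)^2)"
    using assms unfolding L2_Rplus_iff by auto
  show "(\<lambda>x. f x * g x) \<in> borel_measurable Rplus"
    using assms unfolding L2_Rplus_iff by (intro borel_measurable_times) auto
  have "\<bar>f x * g x\<bar> \<le> (f x)^2 + (g x)^2" for x
    using zero_le_power2[of "\<bar>f x\<bar> - \<bar>g x\<bar>"] abs_ge_zero[of "f x * g x"]
    unfolding power2_diff abs_mult power2_abs by linarith
  then show "AE x in Rplus. norm (f x * g x) \<le> norm ((f x)^2 + (g x)^2)"
    by (intro AE_I2) simp
qed

lemma L2_Rplus_lincomb:
  assumes "L2_Rplus f" "L2_Rplus g"
  shows "L2_Rplus (\<lambda>x. a * f x + b * g x)"
  unfolding L2_Rplus_iff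
proof
  show meas: "(\<lambda>x. a * f x + b * g x) \<in> borel_measurable Rplus"
    using assms unfolding L2_Rplus_iff by (intro borel_measurable_add borel_measurable_times) auto
  show "integrable Rplus (\<lambda>x. (a * f x + b * g x)^2)"
  proof (rule Bochner_Integration.integrable_bound)
    show "integrable Rplus (\<lambda>x. 2 * a^2 * (f x)^2 + 2 * b^2 * (g x)^2)"
      using assms unfolding L2_Rplus_iff by auto
    show "(\<lambda>x. (a * f x + b * g x)^2) \<in> borel_measurable Rplus"
      using meas by (rule borel_measurable_power)
    have "(a * f x + b * g x)^2 \<le> 2 * a^2 * (f x)^2 + 2 * b^2 * (g x)^2" for x
      using zero_le_power2[of "a * f x - b * g x"]
      unfolding power2_diff power2_sum power_mult_distrib by linarith
    then show "AE x in Rplus. norm ((a * f x + b * g x)^2) \<le> norm (2 * a^2 * (f x)^2 + 2 * b^2 * (g x)^2)"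
      by (intro AE_I2) simp
  qed
qed

lemma L2_Rplus_diff: "L2_Rplus f \<Longrightarrow> L2_Rplus g \<Longrightarrow> L2_Rplus (\<lambda>x. f x - g x)"
  using L2_Rplus_lincomb[of f g 1 "- 1"] by simp

lemma l2inner_commute: "l2inner f g = l2inner g f"
  unfolding l2inner_def by (simp add: mult.commute)

lemma l2inner_lincomb_left:
  assumes "L2_Rplus f" "L2_Rplus g" "L2_Rplus h"
  shows "l2inner (\<lambda>x. a * f x + b * g x) h = a * l2inner f h + b * l2inner g h"
proof -
  have "l2inner (\<lambda>x. a * f x + b * g x) h = (\<integral>x. a * (f x * h x) + b * (g x * h x) \<partial>Rplus)"
    unfolding l2inner_eq_integral by (simp add: algebra_simps)
  also have "\<dots> = a * l2inner f h + b * l2inner g h"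
    unfolding l2inner_eq_integral using assms by (simp add: integrable_mult_L2_Rplus)
  finally show ?thesis .
qed

lemma l2inner_lincomb_right:
  "L2_Rplus f \<Longrightarrow> L2_Rplus g \<Longrightarrow> L2_Rplus h \<Longrightarrow>
    l2inner h (\<lambda>x. a * f x + b * g x) = a * l2inner h f + b * l2inner h g"
  using l2inner_lincomb_left by (simp add: l2inner_commute)

lemma l2inner_self_nonneg: "0 \<le> l2inner f f"
  unfolding l2inner_eq_integral by simp

lemma l2norm_eq_sqrt_l2inner: "l2norm f = sqrt (l2inner f f)"
  unfolding l2norm_def l2inner_def by (simp add: power2_eq_square)

lemma l2norm_nonneg: "0 \<le> l2norm f"
  by (simp add: l2norm_eq_sqrt_l2inner l2inner_self_nonneg)

lemma l2norm_power2: "(l2norm f)^2 = l2inner f f"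
  by (simp add: l2norm_eq_sqrt_l2inner l2inner_self_nonneg)

lemma l2inner_lincomb_self:
  assumes "L2_Rplus f" "L2_Rplus g"
  shows "l2inner (\<lambda>x. a * f x + b * g x) (\<lambda>x. a * f x + b * g x)
    = a^2 * l2inner f f + 2 * a * b * l2inner f g + b^2 * l2inner g g"
  using assms L2_Rplus_lincomb[OF assms]
  by (simp add: l2inner_lincomb_left l2inner_lincomb_right l2inner_commute[of g f] power2_eq_square algebra_simps)

lemma abs_le_sqrt_mult_if_quadratic_nonneg:
  fixes A B m :: real
  assumes nonneg: "\<And>s t. 0 \<le> s^2 * A - 2 * s * t * m + t^2 * B" and "A \<ge> 0" "B \<ge> 0"
  shows "\<bar>m\<bar> \<le> sqrt A * sqrt B"
proof -
  have "m^2 \<le> A * B"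
  proof (cases "B = 0")
    case True
    have "m = 0"
    proof (rule ccontr)
      assume "m \<noteq> 0"
      then show False
        using nonneg[of 1 "(A + 1) / (2 * m)"] True by (simp add: field_simps)
    qed
    then show ?thesis using assms by simp
  next
    case False
    have "0 \<le> B * (A * B - m^2)"
      using nonneg[of B m] by (simp add: power2_eq_square algebra_simps)
    then show ?thesis using False \<open>B \<ge> 0\<close> by (simp add: zero_le_mult_iff)
  qed
  then show ?thesis
    by (metis real_sqrt_abs real_sqrt_le_mono real_sqrt_mult)
qed

lemma Cauchy_Schwarz_l2inner:
  assumes "L2_Rplus f" "L2_Rplus g"
  shows "\<bar>l2inner f g\<bar> \<le> l2norm f * l2norm g"
proof -
  have "0 \<le> s^2 * l2inner f f - 2 * s * t * l2inner f g + t^2 * l2inner g g" for s t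
    using l2inner_self_nonneg[of "\<lambda>x. s * f x + (- t) * g x"] l2inner_lincomb_self[OF assms, of s "- t"]
    by simp
  then show ?thesis
    using abs_le_sqrt_mult_if_quadratic_nonneg[OF _ l2inner_self_nonneg l2inner_self_nonneg]
    by (simp add: l2norm_eq_sqrt_l2inner)
qed

lemma l2norm_add_mult_le:
  assumes "L2_Rplus f" "L2_Rplus g"
  shows "l2norm (\<lambda>x. f x + c * g x) \<le> l2norm f + \<bar>c\<bar> * l2norm g"
proof (rule power2_le_imp_le)
  have "(l2norm (\<lambda>x. f x + c * g x))^2 = l2inner f f + 2 * c * l2inner f g + c^2 * l2inner g g"
    using l2inner_lincomb_self[OF assms, of 1 c] by (simp add: l2norm_power2)
  also have "\<dots> \<le> (l2norm f)^2 + 2 * \<bar>c\<bar> * (l2norm f * l2norm g) + c^2 * (l2norm g)^2"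
  proof -
    have "c * l2inner f g \<le> \<bar>c\<bar> * \<bar>l2inner f g\<bar>"
      by (metis abs_ge_self abs_mult)
    also have "\<dots> \<le> \<bar>c\<bar> * (l2norm f * l2norm g)"
      using Cauchy_Schwarz_l2inner[OF assms] by (simp add: mult_left_mono)
    finally show ?thesis by (simp add: l2norm_power2)
  qed
  also have "\<dots> = (l2norm f + \<bar>c\<bar> * l2norm g)^2"
    by (simp add: power2_eq_square algebra_simps)
  finally show "(l2norm (\<lambda>x. f x + c * g x))^2 \<le> (l2norm f + \<bar>c\<bar> * l2norm g)^2" .
qed (simp add: l2norm_nonneg)

text \<open>If \<open>\<psi>\<close> has norm 0, the coefficient is 0 by division by zero, and the claim follows from
  Cauchy-Schwarz.\<close>

lemma l2inner_remove_component:
  assumes "L2_Rplus h" "L2_Rplus \<psi>"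
  shows "l2inner (\<lambda>x. h x - l2inner h \<psi> / l2inner \<psi> \<psi> * \<psi> x) \<psi> = 0"
proof -
  let ?c = "l2inner h \<psi> / l2inner \<psi> \<psi>"
  have "l2inner (\<lambda>x. h x - ?c * \<psi> x) \<psi> = l2inner h \<psi> - ?c * l2inner \<psi> \<psi>"
    using l2inner_lincomb_left[OF assms assms(2), of 1 "- ?c"] by simp
  moreover have "l2inner h \<psi> = 0" if "l2inner \<psi> \<psi> = 0"
    using Cauchy_Schwarz_l2inner[OF assms] that by (simp add: l2norm_eq_sqrt_l2inner)
  ultimately show ?thesis
    by (cases "l2inner \<psi> \<psi> = 0") simp_all
qed

section \<open>Polynomials times the Laguerre weight\<close>

definition exp_poly :: "real \<Rightarrow> real poly \<Rightarrow> real \<Rightarrow> real" where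
  "exp_poly \<beta> p x = exp (- \<beta> * x / 2) * poly p x"

lemma Phat_eq: "Phat \<beta> K = {exp_poly \<beta> p | p. degree p \<le> K}"
  unfolding Phat_def exp_poly_def[abs_def] by blast

lemma exp_poly_add: "exp_poly \<beta> p x + exp_poly \<beta> q x = exp_poly \<beta> (p + q) x"
  and exp_poly_diff: "exp_poly \<beta> p x - exp_poly \<beta> q x = exp_poly \<beta> (p - q) x"
  and exp_poly_smult: "c * exp_poly \<beta> p x = exp_poly \<beta> (smult c p) x"
  and exp_poly_at_0: "exp_poly \<beta> p 0 = poly p 0"
  by (simp_all add: exp_poly_def algebra_simps)

lemma continuous_on_exp_poly: "continuous_on A (exp_poly \<beta> p)"
  unfolding exp_poly_def[abs_def] by (intro continuous_intros) auto

lemma has_real_derivative_exp_poly: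
  "(exp_poly \<beta> p has_real_derivative exp_poly \<beta> (pderiv p - smult (\<beta>/2) p) x) (at x)"
proof -
  have "((\<lambda>x. exp (- \<beta> * x / 2) * poly p x) has_real_derivative
      exp (- \<beta> * x / 2) * (- \<beta> / 2) * poly p x + exp (- \<beta> * x / 2) * poly (pderiv p) x) (at x)"
    by (auto intro!: derivative_eq_intros poly_DERIV)
  then show ?thesis
    unfolding exp_poly_def[abs_def] by (simp add: algebra_simps)
qed

lemma deriv_exp_poly: "deriv (exp_poly \<beta> p) = exp_poly \<beta> (pderiv p - smult (\<beta>/2) p)"
  using has_real_derivative_exp_poly DERIV_imp_deriv by blast

lemma set_integral_exp_poly_deriv:
  assumes "x \<ge> 0"
  shows "(LINT t:{0..x}|lborel. deriv (exp_poly \<beta> p) t) = exp_poly \<beta> p x - exp_poly \<beta> p 0"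
  unfolding set_lebesgue_integral_def deriv_exp_poly
proof (rule integral_FTC_atLeastAtMost[OF assms])
  show "(exp_poly \<beta> p has_vector_derivative exp_poly \<beta> (pderiv p - smult (\<beta>/2) p) t) (at t within {0..x})" for t
    using has_real_derivative_exp_poly
    by (simp add: has_real_derivative_iff_has_vector_derivative[symmetric] has_field_derivative_at_within)
qed (rule continuous_on_exp_poly)

lemma set_integrable_power_exp:
  assumes "b > 0"
  shows "set_integrable lborel {0..} (\<lambda>x::real. x^k * exp (-b*x))"
proof -
  have "integrable lborel (\<lambda>x::real. x^k * exp (-x) * indicator {0..} x)"
  proof (rule integrableI_nn_integral_finite)
    show "(\<integral>\<^sup>+x. ennreal (x^k * exp (-x) * indicator {0..} x) \<partial>lborel) = ennreal (fact k)"
      using nn_intergal_power_times_exp_Ici[of k]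
      by (subst nn_integral_cong[where v="\<lambda>x. ennreal (x^k * exp (-x)) * indicator {0 ..} x"])
         (auto split: split_indicator)
  qed (auto split: split_indicator)
  then have "integrable lborel (\<lambda>x. (\<lambda>y::real. y^k * exp (-y) * indicator {0..} y) (0 + b * x))"
    by (rule lborel_integrable_real_affine) (use assms in auto)
  then have "integrable lborel (\<lambda>x. (1 / b^k) * ((b*x)^k * exp (-(b*x)) * indicator {0..} (b*x)))"
    by simp
  moreover have "(\<lambda>x. (1 / b^k) * ((b*x)^k * exp (-(b*x)) * indicator {0..} (b*x))) =
     (\<lambda>x. indicator {0..} x *\<^sub>R (x^k * exp (-b*x)))"
    using assms by (auto simp: fun_eq_iff power_mult_distrib zero_le_mult_iff split: split_indicator)
  ultimately show ?thesis unfolding set_integrable_def by simp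
qed

lemma set_integrable_exp_times_poly:
  assumes "b > 0"
  shows "set_integrable lborel {0..} (\<lambda>x::real. exp (-b*x) * poly p x)"
proof -
  have "set_integrable lborel {0..} (\<lambda>x::real. \<Sum>i\<le>degree p. coeff p i * (x^i * exp (-b*x)))"
  proof -
    have "set_integrable lborel {0..} (\<lambda>x::real. coeff p i * (x^i * exp (-b*x)))" for i
      by (intro set_integrable_mult_right set_integrable_power_exp assms)
    then show ?thesis
      unfolding set_integrable_def scaleR_sum_right by (intro Bochner_Integration.integrable_sum) blast
  qed
  moreover have "(\<lambda>x::real. \<Sum>i\<le>degree p. coeff p i * (x^i * exp (-b*x))) = (\<lambda>x. exp (-b*x) * poly p x)"
    by (auto simp: fun_eq_iff poly_altdef sum_distrib_left mult_ac)
  ultimately show ?thesis by simp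
qed

lemma L2_Rplus_exp_poly:
  assumes "\<beta> > 0"
  shows "L2_Rplus (exp_poly \<beta> p)"
  unfolding L2_Rplus_def set_borel_measurable_def
proof
  have "exp_poly \<beta> p \<in> borel_measurable borel"
    by (rule borel_measurable_continuous_onI[OF continuous_on_exp_poly])
  then show "(\<lambda>x. indicator {0..} x *\<^sub>R exp_poly \<beta> p x) \<in> borel_measurable lborel"
    by measurable
  have "(\<lambda>x. (exp_poly \<beta> p x)^2) = (\<lambda>x. exp (- \<beta> * x) * poly (p * p) x)"
    by (simp add: fun_eq_iff exp_poly_def power2_eq_square mult_ac flip: exp_add)
  then show "set_integrable lborel {0..} (\<lambda>x. (exp_poly \<beta> p x)\<^sup>2)"
    using set_integrable_exp_times_poly[OF assms, of "p * p"] by (simp only:)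
qed

lemma Phat_L2_Rplus: "\<beta> > 0 \<Longrightarrow> f \<in> Phat \<beta> K \<Longrightarrow> L2_Rplus f"
  unfolding Phat_eq using L2_Rplus_exp_poly by auto

lemma Phat_lincomb:
  assumes "f \<in> Phat \<beta> K" "g \<in> Phat \<beta> K"
  shows "(\<lambda>x. a * f x + c * g x) \<in> Phat \<beta> K"
proof -
  obtain p q where "degree p \<le> K" "f = exp_poly \<beta> p" "degree q \<le> K" "g = exp_poly \<beta> q"
    using assms unfolding Phat_eq by auto
  moreover have "degree (smult a p + smult c q) \<le> max (degree p) (degree q)"
    by (meson degree_add_le degree_smult_le max.cobounded1 max.cobounded2 order_trans)
  ultimately show ?thesis
    unfolding Phat_eq by (auto simp: exp_poly_smult exp_poly_add intro!: exI[of _ "smult a p + smult c q"])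
qed

lemma l2inner_exp_poly_self_eq_0_iff:
  assumes "\<beta> > 0"
  shows "l2inner (exp_poly \<beta> p) (exp_poly \<beta> p) = 0 \<longleftrightarrow> p = 0"
proof
  assume "l2inner (exp_poly \<beta> p) (exp_poly \<beta> p) = 0"
  then have "AE x in Rplus. (exp_poly \<beta> p x)^2 = 0"
    using L2_Rplus_exp_poly[OF assms, of p]
    by (subst integral_nonneg_eq_0_iff_AE[symmetric]) (auto simp: L2_Rplus_iff l2inner_eq_integral power2_eq_square)
  then have roots: "AE x in lborel. x \<in> {0..} \<longrightarrow> poly p x = 0"
    by (simp add: AE_restrict_space_iff exp_poly_def)
  show "p = 0"
  proof (rule ccontr)
    assume "p \<noteq> 0"
    then have "AE x in lborel. poly p x \<noteq> 0"
      using AE_not_in[OF finite_imp_null_set_lborel[OF poly_roots_finite]] by simp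
    with roots have "AE x in lborel. x \<notin> {0..1::real}"
      by eventually_elim auto
    then have "{0..1::real} \<in> null_sets lborel"
      by (subst AE_iff_null_sets) auto
    then show False
      using null_setsD1 by fastforce
  qed
qed (simp add: l2inner_def exp_poly_def)

lemma deriv_Phat:
  assumes "f \<in> Phat \<beta> K"
  shows "deriv f \<in> Phat \<beta> K"
proof -
  obtain p where p: "degree p \<le> K" "f = exp_poly \<beta> p"
    using assms unfolding Phat_eq by blast
  then have "degree (pderiv p - smult (\<beta>/2) p) \<le> K"
    by (intro degree_diff_le) (auto simp: degree_pderiv)
  then show ?thesis
    unfolding Phat_eq p(2) deriv_exp_poly by blast
qed

lemma deriv_diff_Phat:
  assumes "f \<in> Phat \<beta> K" "g \<in> Phat \<beta> K"
  shows "deriv (\<lambda>x. f x - g x) = (\<lambda>x. deriv f x - deriv g x)"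
proof -
  have "exp_poly \<beta> p field_differentiable at x" for p x
    using has_real_derivative_exp_poly field_differentiable_def by blast
  moreover obtain p q where fg: "f = exp_poly \<beta> p" "g = exp_poly \<beta> q"
    using assms unfolding Phat_eq by blast
  ultimately show ?thesis
    unfolding fg by (simp add: fun_eq_iff)
qed

lemma P0hat_diff: "f \<in> P0hat \<beta> N \<Longrightarrow> g \<in> P0hat \<beta> N \<Longrightarrow> (\<lambda>x. f x - g x) \<in> P0hat \<beta> N"
  unfolding P0hat_def using Phat_lincomb[of f \<beta> N g 1 "- 1"] by simp

lemma poly_antiderivative_exists:
  fixes p :: "real poly"
  obtains q where "pderiv q = p" "poly q 0 = 0" "degree q \<le> Suc (degree p)"
proof
  define q where "q = Poly (0 # map (\<lambda>i. coeff p i / real (Suc i)) [0..<Suc (degree p)])"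
  have coeff_q: "coeff q (Suc i) = coeff p i / real (Suc i)" for i
    unfolding q_def by (cases "i \<le> degree p") (auto simp: nth_default_def coeff_eq_0 nth_append)
  show "pderiv q = p"
    by (rule poly_eqI) (simp add: coeff_pderiv coeff_q)
  show "poly q 0 = 0"
    unfolding q_def by (simp add: poly_0_coeff_0 nth_default_def)
  show "degree q \<le> Suc (degree p)"
    by (rule degree_le) (auto simp: coeff_q coeff_eq_0 gr0_conv_Suc dest!: less_imp_Suc_add)
qed

lemma P0hat_deriv_plus_eq:
  assumes "N \<ge> 1" "r \<in> Phat \<beta> (N - 1)"
  obtains \<phi> where "\<phi> \<in> P0hat \<beta> N" "\<And>x. deriv \<phi> x + \<beta>/2 * \<phi> x = r x"
proof -
  obtain p where p: "degree p \<le> N - 1" "r = exp_poly \<beta> p"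
    using assms(2) unfolding Phat_eq by blast
  obtain q where q: "pderiv q = p" "poly q 0 = 0" "degree q \<le> Suc (degree p)"
    by (rule poly_antiderivative_exists)
  have "exp_poly \<beta> q \<in> P0hat \<beta> N"
    using q p(1) assms(1) unfolding P0hat_def Phat_eq by (auto simp: exp_poly_at_0)
  moreover have "deriv (exp_poly \<beta> q) x + \<beta>/2 * exp_poly \<beta> q x = r x" for x
    by (simp add: deriv_exp_poly p(2) q(1) exp_poly_def algebra_simps)
  ultimately show ?thesis
    using that by blast
qed

section \<open>Existence of the $L^2$ projection\<close>

definition is_l2proj :: "(real \<Rightarrow> real) set \<Rightarrow> (real \<Rightarrow> real) \<Rightarrow> (real \<Rightarrow> real) \<Rightarrow> bool" where
  "is_l2proj S f g \<longleftrightarrow> g \<in> S \<and> (\<forall>v\<in>S. l2inner (\<lambda>x. f x - g x) v = 0)"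

definition extend_by :: "(real \<Rightarrow> real) set \<Rightarrow> (real \<Rightarrow> real) \<Rightarrow> (real \<Rightarrow> real) set" where
  "extend_by S e = {\<lambda>x. s x + c * e x | s c. s \<in> S}"

lemma is_l2proj_extend_by:
  assumes S_lincomb: "\<And>f g a c. f \<in> S \<Longrightarrow> g \<in> S \<Longrightarrow> (\<lambda>x. a * f x + c * g x) \<in> S"
    and S_L2: "\<And>f. f \<in> S \<Longrightarrow> L2_Rplus f"
    and S_proj: "\<And>f. L2_Rplus f \<Longrightarrow> \<exists>g. is_l2proj S f g"
    and "L2_Rplus e" "L2_Rplus f"
  shows "\<exists>g. is_l2proj (extend_by S e) f g"
proof -
  obtain ge where ge: "is_l2proj S e ge"
    using S_proj[OF \<open>L2_Rplus e\<close>] by blast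
  obtain g0 where g0: "is_l2proj S f g0"
    using S_proj[OF \<open>L2_Rplus f\<close>] by blast
  define \<psi> where "\<psi> x = e x - ge x" for x
  define h where "h x = f x - g0 x" for x
  define c0 where "c0 = l2inner h \<psi> / l2inner \<psi> \<psi>"
  define r where "r x = h x - c0 * \<psi> x" for x
  have L2: "L2_Rplus \<psi>" "L2_Rplus h"
    using S_L2 ge g0 \<open>L2_Rplus e\<close> \<open>L2_Rplus f\<close>
    unfolding \<psi>_def[abs_def] h_def[abs_def] is_l2proj_def by (auto intro: L2_Rplus_diff)
  then have "L2_Rplus r"
    using L2_Rplus_lincomb[of h \<psi> 1 "- c0"] by (simp add: r_def[abs_def])
  have r_perp_S: "l2inner r s = 0" if "s \<in> S" for s
    using ge g0 that L2 S_L2 l2inner_lincomb_left[of h \<psi> s 1 "- c0"]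
    unfolding is_l2proj_def \<psi>_def[symmetric] h_def[symmetric] r_def[abs_def] by simp
  have r_perp_\<psi>: "l2inner r \<psi> = 0"
    using l2inner_remove_component[OF L2(2,1)] by (simp add: r_def[abs_def] c0_def)
  define g where "g x = (g0 x - c0 * ge x) + c0 * e x" for x
  have "is_l2proj (extend_by S e) f g"
    unfolding is_l2proj_def extend_by_def
  proof (intro conjI ballI)
    have "(\<lambda>x. 1 * g0 x + (- c0) * ge x) \<in> S"
      using S_lincomb g0 ge unfolding is_l2proj_def by blast
    then show "g \<in> {\<lambda>x. s x + c * e x | s c. s \<in> S}"
      unfolding g_def[abs_def] by force
  next
    fix v assume "v \<in> {\<lambda>x. s x + c * e x | s c. s \<in> S}"
    then obtain s c where "s \<in> S" and v: "v = (\<lambda>x. 1 * (s x + c * ge x) + c * \<psi> x)"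
      by (auto simp: \<psi>_def algebra_simps)
    moreover have "(\<lambda>x. 1 * s x + c * ge x) \<in> S"
      using S_lincomb \<open>s \<in> S\<close> ge unfolding is_l2proj_def by blast
    moreover have "(\<lambda>x. f x - g x) = r"
      by (auto simp: r_def h_def \<psi>_def g_def algebra_simps)
    ultimately show "l2inner (\<lambda>x. f x - g x) v = 0"
      using l2inner_lincomb_right[of "\<lambda>x. 1 * s x + c * ge x" \<psi> r 1 c] L2 \<open>L2_Rplus r\<close> S_L2 r_perp_S r_perp_\<psi>
      by simp
  qed
  then show ?thesis by blast
qed

lemma Phat_0_eq: "Phat \<beta> 0 = extend_by {\<lambda>_. 0} (exp_poly \<beta> 1)"
proof -
  have const: "(\<lambda>x. 0 + c * exp_poly \<beta> 1 x) = exp_poly \<beta> [:c:]" for c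
    by (simp add: fun_eq_iff exp_poly_def)
  have "exp_poly \<beta> p \<in> extend_by {\<lambda>_. 0} (exp_poly \<beta> 1)" if "degree p \<le> 0" for p
  proof -
    have "exp_poly \<beta> p = (\<lambda>x. (\<lambda>_. 0) x + coeff p 0 * exp_poly \<beta> 1 x)"
      using degree_0_id[of p] that const[of "coeff p 0"] by simp
    then show ?thesis
      unfolding extend_by_def by (intro CollectI exI[of _ "\<lambda>_. 0"] exI[of _ "coeff p 0"]) simp
  qed
  moreover have "exp_poly \<beta> [:c:] \<in> Phat \<beta> 0" for c
    unfolding Phat_eq by force
  ultimately show ?thesis
    unfolding extend_by_def Phat_eq[of \<beta> 0] using const by auto
qed

lemma Phat_Suc_eq: "Phat \<beta> (Suc K) = extend_by (Phat \<beta> K) (exp_poly \<beta> (monom 1 (Suc K)))"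
proof (intro set_eqI iffI)
  fix f assume "f \<in> Phat \<beta> (Suc K)"
  then obtain p where p: "degree p \<le> Suc K" "f = exp_poly \<beta> p"
    unfolding Phat_eq by blast
  define q where "q = p - monom (coeff p (Suc K)) (Suc K)"
  have "degree q \<le> K"
    using p(1) by (intro degree_le) (auto simp: q_def coeff_eq_0 coeff_monom)
  then have "exp_poly \<beta> q \<in> Phat \<beta> K"
    unfolding Phat_eq by blast
  moreover have "f = (\<lambda>x. exp_poly \<beta> q x + coeff p (Suc K) * exp_poly \<beta> (monom 1 (Suc K)) x)"
    by (simp add: fun_eq_iff p(2) q_def exp_poly_def poly_monom algebra_simps)
  ultimately show "f \<in> extend_by (Phat \<beta> K) (exp_poly \<beta> (monom 1 (Suc K)))"
    unfolding extend_by_def by blast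
next
  fix f assume "f \<in> extend_by (Phat \<beta> K) (exp_poly \<beta> (monom 1 (Suc K)))"
  then obtain q c where q: "degree q \<le> K"
    and f: "f = (\<lambda>x. exp_poly \<beta> q x + c * exp_poly \<beta> (monom 1 (Suc K)) x)"
    unfolding extend_by_def Phat_eq by blast
  have "degree (q + monom c (Suc K)) \<le> Suc K"
    using q by (intro degree_add_le) (auto simp: degree_monom_le)
  moreover have "f = exp_poly \<beta> (q + monom c (Suc K))"
    by (simp add: fun_eq_iff f exp_poly_smult exp_poly_add smult_monom)
  ultimately show "f \<in> Phat \<beta> (Suc K)"
    unfolding Phat_eq by blast
qed

lemma is_l2proj_Phat_exists:
  assumes "\<beta> > 0" "L2_Rplus f"
  shows "\<exists>g. is_l2proj (Phat \<beta> K) f g"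
  using assms(2)
proof (induction K arbitrary: f)
  case 0
  have "is_l2proj {\<lambda>_. 0} f (\<lambda>_. 0)" for f :: "real \<Rightarrow> real"
    by (simp add: is_l2proj_def l2inner_def)
  moreover have "L2_Rplus (\<lambda>_. 0)"
    by (simp add: L2_Rplus_iff)
  ultimately show ?case
    unfolding Phat_0_eq using 0 L2_Rplus_exp_poly[OF assms(1)]
    by (intro is_l2proj_extend_by) auto
next
  case (Suc K)
  show ?case
    unfolding Phat_Suc_eq using Suc Phat_lincomb Phat_L2_Rplus[OF assms(1)] L2_Rplus_exp_poly[OF assms(1)]
    by (intro is_l2proj_extend_by) auto
qed

lemma is_l2proj_Phat_unique:
  assumes "\<beta> > 0" "L2_Rplus f" "is_l2proj (Phat \<beta> K) f g1" "is_l2proj (Phat \<beta> K) f g2"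
  shows "g1 = g2"
proof -
  obtain p1 p2 where p: "g1 = exp_poly \<beta> p1" "g2 = exp_poly \<beta> p2"
    using assms(3,4) unfolding is_l2proj_def Phat_eq by blast
  define d where "d x = g1 x - g2 x" for x
  have "d \<in> Phat \<beta> K"
    using Phat_lincomb[of g1 \<beta> K g2 1 "- 1"] assms(3,4) by (simp add: d_def[abs_def] is_l2proj_def)
  have L2: "L2_Rplus g1" "L2_Rplus g2" "L2_Rplus d"
    using assms(1,3,4) \<open>d \<in> Phat \<beta> K\<close> Phat_L2_Rplus unfolding is_l2proj_def by blast+
  have "d = (\<lambda>x. 1 * (f x - g2 x) + (- 1) * (f x - g1 x))"
    by (simp add: d_def[abs_def])
  then have "l2inner d d = 0"
    using assms(3,4) \<open>d \<in> Phat \<beta> K\<close> L2 assms(2)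
    by (subst (1) \<open>d = _\<close>, subst l2inner_lincomb_left) (auto intro: L2_Rplus_diff simp: is_l2proj_def)
  moreover have "d = exp_poly \<beta> (p1 - p2)"
    by (simp add: d_def[abs_def] p exp_poly_diff)
  ultimately show ?thesis
    using l2inner_exp_poly_self_eq_0_iff[OF assms(1)] p by simp
qed

lemma hproj_in_Phat:
  assumes "\<beta> > 0" "L2_Rplus f"
  shows "hproj \<beta> K f \<in> Phat \<beta> K"
proof -
  have "\<exists>!g. is_l2proj (Phat \<beta> K) f g"
    using is_l2proj_Phat_exists[OF assms] is_l2proj_Phat_unique[OF assms] by blast
  then have "is_l2proj (Phat \<beta> K) f (hproj \<beta> K f)"
    unfolding hproj_def is_l2proj_def[symmetric] by (rule theI')
  then show ?thesis
    unfolding is_l2proj_def by blast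
qed

section \<open>Positivity of $(v', v)$ on $H^1_0$\<close>

lemma integrable_lborel_pair_mult:
  fixes h :: "real \<Rightarrow> real"
  assumes "integrable lborel h"
  shows "integrable (lborel \<Otimes>\<^sub>M lborel) (\<lambda>(s, t). h s * h t)"
proof (rule lborel_pair.Fubini_integrable)
  have [measurable]: "h \<in> borel_measurable borel"
    using assms by auto
  show "(\<lambda>(s, t). h s * h t) \<in> borel_measurable (lborel \<Otimes>\<^sub>M lborel)"
    by measurable
  show "integrable lborel (\<lambda>s. \<integral>t. norm (case (s, t) of (s, t) \<Rightarrow> h s * h t) \<partial>lborel)"
    using assms by (simp add: abs_mult)
  show "AE s in lborel. integrable lborel (\<lambda>t. case (s, t) of (s, t) \<Rightarrow> h s * h t)"
    using assms by simp
qed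

text \<open>Split \<open>(\<integral>h)\<^sup>2 = \<integral>\<integral>h s * h t\<close> into the regions \<open>t \<le> s\<close> and \<open>s < t\<close>; by Fubini each
  contributes \<open>\<integral>h s * H s\<close>, where \<open>H\<close> is the primitive of \<open>h\<close>.\<close>

lemma integral_mult_cumulative:
  fixes h :: "real \<Rightarrow> real"
  assumes h: "integrable lborel h"
  shows "2 * (\<integral>s. h s * (\<integral>t. indicator {..s} t * h t \<partial>lborel) \<partial>lborel) = (\<integral>s. h s \<partial>lborel)^2"
proof -
  have [measurable]: "h \<in> borel_measurable borel"
    using h by auto
  define H where "H s = (\<integral>t. indicator {..s} t * h t \<partial>lborel)" for s
  have H_strict: "(\<integral>t. indicator {..<s} t * h t \<partial>lborel) = H s" for s
    unfolding H_def
    by (intro integral_cong_AE eventually_mono[OF AE_lborel_singleton[of s]]) (auto split: split_indicator)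
  define lower where "lower = (\<lambda>(s, t). h s * (indicator {..s} t * h t))"
  define upper where "upper = (\<lambda>(s, t). h t * (indicator {..<t} s * h s))"
  have "lower \<in> borel_measurable (lborel \<Otimes>\<^sub>M lborel)" "upper \<in> borel_measurable (lborel \<Otimes>\<^sub>M lborel)"
    unfolding lower_def upper_def indicator_def by (simp_all add: of_bool_def case_prod_beta)
  then have integrable: "integrable (lborel \<Otimes>\<^sub>M lborel) lower" "integrable (lborel \<Otimes>\<^sub>M lborel) upper"
    unfolding lower_def upper_def
    by (auto intro!: Bochner_Integration.integrable_bound[OF integrable_lborel_pair_mult[OF h]]
        simp: abs_mult split: split_indicator)
  have "(\<integral>s. h s \<partial>lborel)^2 = (\<integral>s. (\<integral>t. h s * h t \<partial>lborel) \<partial>lborel)"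
    by (simp add: power2_eq_square)
  also have "\<dots> = integral\<^sup>L (lborel \<Otimes>\<^sub>M lborel) (\<lambda>(s, t). h s * h t)"
    by (rule lborel_pair.integral_fst[OF integrable_lborel_pair_mult[OF h]])
  also have "\<dots> = integral\<^sup>L (lborel \<Otimes>\<^sub>M lborel) (\<lambda>p. lower p + upper p)"
    by (intro Bochner_Integration.integral_cong) (auto simp: lower_def upper_def split: split_indicator)
  also have "\<dots> = integral\<^sup>L (lborel \<Otimes>\<^sub>M lborel) lower + integral\<^sup>L (lborel \<Otimes>\<^sub>M lborel) upper"
    using integrable by (rule Bochner_Integration.integral_add)
  also have "integral\<^sup>L (lborel \<Otimes>\<^sub>M lborel) lower = (\<integral>s. h s * H s \<partial>lborel)"
    using lborel_pair.integral_fst[of "\<lambda>s t. h s * (indicator {..s} t * h t)"] integrable(1)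
    by (simp add: lower_def H_def)
  also have "integral\<^sup>L (lborel \<Otimes>\<^sub>M lborel) upper = (\<integral>t. h t * H t \<partial>lborel)"
    using lborel_pair.integral_snd[of "\<lambda>s t. h t * (indicator {..<t} s * h s)"] integrable(2)
    by (simp add: upper_def H_strict)
  finally show ?thesis
    by (simp add: H_def)
qed

lemma set_integral_mult_primitive:
  fixes g :: "real \<Rightarrow> real"
  assumes "set_integrable lborel {0..X} g"
  shows "2 * (LINT x:{0..X}|lborel. (LINT t:{0..x}|lborel. g t) * g x) = (LINT t:{0..X}|lborel. g t)^2"
proof -
  define h where "h x = indicator {0..X} x * g x" for x
  have "integrable lborel h"
    using assms by (simp add: h_def[abs_def] set_integrable_def)
  have primitive: "(\<integral>t. indicator {..x} t * h t \<partial>lborel) = (LINT t:{0..x}|lborel. g t)" if "x \<le> X" for x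
    unfolding set_lebesgue_integral_def h_def
    by (intro Bochner_Integration.integral_cong) (use that in \<open>auto split: split_indicator\<close>)
  have "h x * (\<integral>t. indicator {..x} t * h t \<partial>lborel) =
      indicator {0..X} x *\<^sub>R ((LINT t:{0..x}|lborel. g t) * g x)" for x
  proof (cases "x \<in> {0..X}")
    case True
    then show ?thesis by (simp add: primitive) (simp add: h_def)
  qed (simp add: h_def)
  then have "(LINT x:{0..X}|lborel. (LINT t:{0..x}|lborel. g t) * g x) =
      (\<integral>x. h x * (\<integral>t. indicator {..x} t * h t \<partial>lborel) \<partial>lborel)"
    by (simp add: set_lebesgue_integral_def[of _ "{0..X}"])
  also have "(LINT t:{0..X}|lborel. g t) = (\<integral>x. h x \<partial>lborel)"
    by (simp add: set_lebesgue_integral_def h_def)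
  ultimately show ?thesis
    using integral_mult_cumulative[OF \<open>integrable lborel h\<close>] by simp
qed

lemma set_integral_primitive_mult_nonneg:
  fixes g F :: "real \<Rightarrow> real"
  assumes primitive: "\<And>x. x \<ge> 0 \<Longrightarrow> set_integrable lborel {0..x} g \<and> F x = (LINT t:{0..x}|lborel. g t)"
    and "set_integrable lborel {0..} (\<lambda>x. F x * g x)"
  shows "0 \<le> (LINT x:{0..}|lborel. F x * g x)"
proof (rule tendsto_lowerbound)
  show "((\<lambda>b. LINT x:{0..b}|lborel. F x * g x) \<longlongrightarrow> (LINT x:{0..}|lborel. F x * g x)) at_top"
    by (rule tendsto_set_lebesgue_integral_at_top[OF _ assms(2)]) auto
  show "\<forall>\<^sub>F b in at_top. 0 \<le> (LINT x:{0..b}|lborel. F x * g x)"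
  proof (rule eventually_at_top_linorderI)
    fix b :: real assume "b \<ge> 0"
    have "(LINT x:{0..b}|lborel. F x * g x) = (LINT x:{0..b}|lborel. (LINT t:{0..x}|lborel. g t) * g x)"
      by (rule set_lebesgue_integral_cong) (use primitive in auto)
    then have "2 * (LINT x:{0..b}|lborel. F x * g x) = (LINT t:{0..b}|lborel. g t)^2"
      using set_integral_mult_primitive[of b g] primitive[OF \<open>b \<ge> 0\<close>] by simp
    then show "0 \<le> (LINT x:{0..b}|lborel. F x * g x)"
      using zero_le_power2[of "LINT t:{0..b}|lborel. g t"] by linarith
  qed
qed simp

lemma H10_Rplus_diff_P0hat:
  assumes "\<beta> > 0" "H10_Rplus u du" "\<phi> \<in> P0hat \<beta> N"
  shows "H10_Rplus (\<lambda>x. u x - \<phi> x) (\<lambda>x. du x - deriv \<phi> x)"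
proof -
  obtain p where \<phi>: "\<phi> = exp_poly \<beta> p" "\<phi> 0 = 0"
    using assms(3) unfolding P0hat_def Phat_eq by blast
  have L2: "L2_Rplus \<phi>" "L2_Rplus (deriv \<phi>)"
    using L2_Rplus_exp_poly[OF assms(1)] by (simp_all add: \<phi> deriv_exp_poly)
  have "set_integrable lborel {0..x} (\<lambda>t. du t - deriv \<phi> t) \<and>
      u x - \<phi> x = (LINT t:{0..x}|lborel. du t - deriv \<phi> t)" if "x \<ge> 0" for x
  proof -
    have du: "set_integrable lborel {0..x} du" "u x = (LINT t:{0..x}|lborel. du t)"
      using assms(2) that unfolding H10_Rplus_def by auto
    have d\<phi>: "set_integrable lborel {0..x} (deriv \<phi>)"
      unfolding \<phi> deriv_exp_poly by (rule borel_integrable_atLeastAtMost'[OF continuous_on_exp_poly])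
    show ?thesis
      using du d\<phi> set_integral_exp_poly_deriv[OF that, of \<beta> p] \<phi> by simp
  qed
  then show ?thesis
    using assms(2) L2 unfolding H10_Rplus_def by (auto intro: L2_Rplus_diff)
qed

lemma l2inner_deriv_self_nonneg:
  assumes "H10_Rplus v dv"
  shows "0 \<le> l2inner dv v"
proof -
  have "set_integrable lborel {0..} (\<lambda>x. v x * dv x)"
    using assms integrable_mult_L2_Rplus[of v dv] unfolding H10_Rplus_def
    by (simp add: set_integrable_eq)
  then show ?thesis
    using set_integral_primitive_mult_nonneg[of dv v] assms
    unfolding H10_Rplus_def l2inner_def by (simp add: mult.commute)
qed

lemma H10_energy_le:
  assumes "H10_Rplus v dv" "c \<ge> 0"
  shows "(l2norm dv)^2 + c^2 * (l2norm v)^2 \<le> (l2norm (\<lambda>x. dv x + c * v x))^2"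
proof -
  have "L2_Rplus v" "L2_Rplus dv"
    using assms(1) unfolding H10_Rplus_def by auto
  then have "(l2norm (\<lambda>x. dv x + c * v x))^2 = (l2norm dv)^2 + 2 * c * l2inner dv v + c^2 * (l2norm v)^2"
    using l2inner_lincomb_self[of dv v 1 c] by (simp add: l2norm_power2)
  then show ?thesis
    using l2inner_deriv_self_nonneg[OF assms(1)] assms(2) by simp
qed

section \<open>The error estimate\<close>

lemma galerkin_energy_le:
  assumes "\<beta> > 0" "H10_Rplus u du" "w \<in> P0hat \<beta> N" "\<phi> \<in> P0hat \<beta> N"
    and orth: "\<forall>v\<in>P0hat \<beta> N.
      l2inner (\<lambda>x. du x - deriv w x) (deriv v) + \<beta>^2 / 4 * l2inner (\<lambda>x. u x - w x) v = 0"
  shows "(l2norm (\<lambda>x. du x - deriv w x))^2 + \<beta>^2 / 4 * (l2norm (\<lambda>x. u x - w x))^2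
    \<le> (l2norm (\<lambda>x. du x - deriv \<phi> x))^2 + \<beta>^2 / 4 * (l2norm (\<lambda>x. u x - \<phi> x))^2"
proof -
  define e where "e x = u x - w x" for x
  define de where "de x = du x - deriv w x" for x
  define d where "d x = w x - \<phi> x" for x
  have "d \<in> P0hat \<beta> N"
    unfolding d_def[abs_def] using assms(3,4) by (rule P0hat_diff)
  have dd: "deriv d = (\<lambda>x. deriv w x - deriv \<phi> x)"
    unfolding d_def[abs_def] using assms(3,4) unfolding P0hat_def by (auto intro: deriv_diff_Phat)
  have L2: "L2_Rplus e" "L2_Rplus de" "L2_Rplus d" "L2_Rplus (deriv d)"
    using H10_Rplus_diff_P0hat[OF assms(1,2,3)] \<open>d \<in> P0hat \<beta> N\<close> Phat_L2_Rplus[OF assms(1)] deriv_Phat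
    unfolding H10_Rplus_def P0hat_def e_def[abs_def] de_def[abs_def] by blast+
  have "l2inner de (deriv d) + \<beta>^2 / 4 * l2inner e d = 0"
    using orth \<open>d \<in> P0hat \<beta> N\<close> by (simp add: e_def[abs_def] de_def[abs_def])
  moreover have "(l2norm (\<lambda>x. du x - deriv \<phi> x))^2
      = l2inner de de + 2 * l2inner de (deriv d) + l2inner (deriv d) (deriv d)"
  proof -
    have "(\<lambda>x. du x - deriv \<phi> x) = (\<lambda>x. 1 * de x + 1 * deriv d x)"
      by (simp add: fun_eq_iff dd de_def)
    then show ?thesis
      using l2inner_lincomb_self[OF L2(2,4), of 1 1] by (simp add: l2norm_power2)
  qed
  moreover have "(l2norm (\<lambda>x. u x - \<phi> x))^2 = l2inner e e + 2 * l2inner e d + l2inner d d"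
  proof -
    have "(\<lambda>x. u x - \<phi> x) = (\<lambda>x. 1 * e x + 1 * d x)"
      by (simp add: fun_eq_iff e_def d_def)
    then show ?thesis
      using l2inner_lincomb_self[OF L2(1,3), of 1 1] by (simp add: l2norm_power2)
  qed
  moreover have "0 \<le> l2inner (deriv d) (deriv d) + \<beta>^2 / 4 * l2inner d d"
    by (simp add: l2inner_self_nonneg)
  ultimately show ?thesis
    by (simp add: l2norm_power2 e_def[symmetric] de_def[symmetric] algebra_simps)
qed

lemma sqrt_add_le_of_weighted_bound:
  fixes \<beta> E D A B :: real
  assumes "\<beta> > 0" "E \<ge> 0" "D \<ge> 0" "A \<ge> 0" "B \<ge> 0"
    and bound: "D + \<beta>^2 / 4 * E \<le> (A + \<beta> / 2 * B)^2"
  shows "sqrt (E + D) \<le> (2 + 2 / \<beta>) * A + (\<beta> + 1) * B"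
proof (cases "\<beta> \<ge> 2")
  case True
  then have "1 \<le> \<beta>^2 / 4"
    using power_mono[of 2 \<beta> 2] by simp
  then have "E + D \<le> (A + \<beta> / 2 * B)^2"
    using bound mult_right_mono[of 1 "\<beta>^2 / 4" E] assms(2) by linarith
  then have "sqrt (E + D) \<le> A + \<beta> / 2 * B"
    using assms by (intro real_le_lsqrt) auto
  moreover have "A \<le> (2 + 2 / \<beta>) * A" "\<beta> / 2 * B \<le> (\<beta> + 1) * B"
    using assms mult_right_mono[of 1 "2 + 2 / \<beta>" A] mult_right_mono[of "\<beta> / 2" "\<beta> + 1" B] by auto
  ultimately show ?thesis by linarith
next
  case False
  then have "1 \<le> 4 / \<beta>^2"
    using assms(1) power_mono[of \<beta> 2 2] by (simp add: field_simps)
  then have "E + D \<le> 4 / \<beta>^2 * (D + \<beta>^2 / 4 * E)"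
    using assms(1,3) mult_right_mono[of 1 "4 / \<beta>^2" D] by (simp add: field_simps)
  also have "\<dots> \<le> 4 / \<beta>^2 * (A + \<beta> / 2 * B)^2"
    by (rule mult_left_mono[OF bound]) simp
  also have "\<dots> = (2 / \<beta> * A + B)^2"
    using assms(1) by (simp add: field_simps power2_eq_square)
  finally have "sqrt (E + D) \<le> 2 / \<beta> * A + B"
    using assms by (intro real_le_lsqrt) auto
  moreover have "2 / \<beta> * A \<le> (2 + 2 / \<beta>) * A" "B \<le> (\<beta> + 1) * B"
    using assms mult_right_mono[of "2 / \<beta>" "2 + 2 / \<beta>" A] mult_right_mono[of 1 "\<beta> + 1" B] by auto
  ultimately show ?thesis by linarith
qed

theorem mainTheorem14:
  fixes \<beta> :: real and N :: nat and u du w :: "real \<Rightarrow> real"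
  assumes "\<beta> > 0" and "N \<ge> 1"
    and "H10_Rplus u du"
    and "w \<in> P0hat \<beta> N"
    and "\<forall>v\<in>P0hat \<beta> N.
           l2inner (\<lambda>x. du x - deriv w x) (deriv v)
           + \<beta>^2 / 4 * l2inner (\<lambda>x. u x - w x) v = 0"
  shows "h1norm (\<lambda>x. u x - w x) (\<lambda>x. du x - deriv w x)
         \<le> (2 + 2 / \<beta>) * l2norm (\<lambda>x. du x - hproj \<beta> (N - 1) du x)
           + (\<beta> + 1) * l2norm (\<lambda>x. u x - hproj \<beta> (N - 1) u x)"
proof -
  let ?\<alpha> = "\<lambda>x. du x - hproj \<beta> (N - 1) du x" and ?\<gamma> = "\<lambda>x. u x - hproj \<beta> (N - 1) u x"
  have L2: "L2_Rplus u" "L2_Rplus du"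
    using assms(3) unfolding H10_Rplus_def by auto
  then have proj: "hproj \<beta> (N - 1) du \<in> Phat \<beta> (N - 1)" "hproj \<beta> (N - 1) u \<in> Phat \<beta> (N - 1)"
    using hproj_in_Phat[OF assms(1)] by auto
  obtain \<phi> where \<phi>: "\<phi> \<in> P0hat \<beta> N"
    and shift: "\<And>x. deriv \<phi> x + \<beta>/2 * \<phi> x = 1 * hproj \<beta> (N - 1) du x + \<beta>/2 * hproj \<beta> (N - 1) u x"
    using P0hat_deriv_plus_eq[OF assms(2) Phat_lincomb[OF proj]] by blast
  have "(l2norm (\<lambda>x. du x - deriv w x))^2 + \<beta>^2 / 4 * (l2norm (\<lambda>x. u x - w x))^2
      \<le> (l2norm (\<lambda>x. du x - deriv \<phi> x))^2 + (\<beta>/2)^2 * (l2norm (\<lambda>x. u x - \<phi> x))^2"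
    using galerkin_energy_le[OF assms(1,3,4) \<phi> assms(5)] by (simp add: power_divide)
  also have "\<dots> \<le> (l2norm (\<lambda>x. (du x - deriv \<phi> x) + \<beta>/2 * (u x - \<phi> x)))^2"
    using H10_energy_le[OF H10_Rplus_diff_P0hat[OF assms(1,3) \<phi>], of "\<beta>/2"] assms(1) by simp
  also have "(\<lambda>x. (du x - deriv \<phi> x) + \<beta>/2 * (u x - \<phi> x)) = (\<lambda>x. ?\<alpha> x + \<beta>/2 * ?\<gamma> x)"
    using shift by (simp add: fun_eq_iff field_simps)
  also have "(l2norm \<dots>)^2 \<le> (l2norm ?\<alpha> + \<beta>/2 * l2norm ?\<gamma>)^2"
    using l2norm_add_mult_le[of ?\<alpha> ?\<gamma> "\<beta>/2"] L2 proj Phat_L2_Rplus[OF assms(1)] assms(1)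
    by (intro power_mono) (auto intro: L2_Rplus_diff simp: l2norm_nonneg)
  finally show ?thesis
    unfolding h1norm_def
    by (intro sqrt_add_le_of_weighted_bound) (use assms(1) in \<open>simp_all add: l2norm_nonneg\<close>)
qed

end
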